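(* Let $(M,\varphi,\xi_\alpha,\eta^\alpha,g)$ be an indefinite $\mathcal{S}$-manifold, $\varepsilon=\sum_{\alpha=1}^r\varepsilon_\alpha$, and $P(X,Y;Z,W)=\Phi(X,Z)g(Y,W)-\Phi(X,W)g(Y,Z)-\Phi(Y,Z)g(X,W)+\Phi(Y,W)g(X,Z)$. Let $T$ and $S$ be $(0,4)$-tensor fields on $M$ such that, for $U\in\{T,S\}$: (i) $U(X,Y,Z,W)=-U(Y,X,Z,W)$ for all vector fields $X,Y,Z,W$; (ii) $U(X,Y,Z,W)=-U(X,Y,W,Z)$ for all $X,Y,Z,W$; (iii) $U(X,Y,Z,W)=U(Z,W,X,Y)$ for all $X,Y,Z,W$; (iv) $U(X,Y,Z,W)+U(X,Z,W,Y)+U(X,W,Y,Z)=0$ for all $X,Y,Z,W$; (v) $U(X,Y,\varphi Z,W)+U(X,Y,Z,\varphi W)=\varepsilon P(X,Y;Z,W)$ for all $X,Y,Z,W\in\Gamma(\mathfrak{D})$; and moreover, for all $X,Y\in\Gamma(\mathfrak{D})$ and all $\alpha,\beta,\gamma,\delta\in\{1,\dots,r\}$: (vi)(a) $T(X,\xi_\alpha,X,Y)=S(X,\xi_\alpha,X,Y)$; (b) $T(\xi_\alpha,X,\xi_\beta,Y)=S(\xi_\alpha,X,\xi_\beta,Y)$; (c) $T(\xi_\alpha,X,\xi_\beta,\xi_\gamma)=S(\xi_\alpha,X,\xi_\beta,\xi_\gamma)$; (d) $T(\xi_\alpha,\xi_\beta,\xi_\gamma,\xi_\delta)=S(\xi_\alpha,\xi_\beta,\xi_\gamma,\xi_\delta)$.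 If $T(X,\varphi X,X,\varphi X)=S(X,\varphi X,X,\varphi X)$ for every non-lightlike vector field $X\in\Gamma(\mathfrak{D})$, then $T=S$.
   Context: Let $M$ be a smooth manifold of dimension $2n+r$. An indefinite metric $g.f.f$-structure $(\varphi,\xi_\alpha,\eta^\alpha,g)$, $\alpha=1,\dots,r$, on $M$ consists of a $(1,1)$-tensor field $\varphi$ of constant rank with $\varphi^3+\varphi=0$, vector fields $\xi_1,\dots,\xi_r$, $1$-forms $\eta^1,\dots,\eta^r$ and a semi-Riemannian metric $g$ of index $\nu$, $0<\nu<2n+r$, such that $\varphi^2=-I+\sum_\alpha\eta^\alpha\otimes\xi_\alpha$, $\eta^\alpha(\xi_\beta)=\delta^\alpha_\beta$, $g(\varphi X,\varphi Y)=g(X,Y)-\sum_\alpha\varepsilon_\alpha\eta^\alpha(X)\eta^\alpha(Y)$ and $\varepsilon_\alpha g(X,\xi_\alpha)=\eta^\alpha(X)$ for all $X,Y$, where $\varepsilon_\alpha=g(\xi_\alpha,\xi_\alpha)\in\{1,-1\}$. $\mathfrak{D}=\operatorname{Im}\varphi$. The fundamental $2$-form is $\Phi(X,Y)=g(X,\varphi Y)$; exterior derivative convention $d\omega(X,Y)=\tfrac12(X(\omega(Y))-Y(\omega(X))-\omega([X,Y]))$. With $N_\varphi(X,Y)=\varphi^2[X,Y]+[\varphi X,\varphi Y]-\varphi[\varphi X,Y]-\varphi[X,\varphi Y]$ and $N=N_\varphi+2\sum_\alpha d\eta^\alpha\otimes\xi_\alpha$, an indefinite $\mathcal{S}$-manifold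 is one with $d\eta^\alpha=\Phi$ for all $\alpha$ and $N=0$. A vector $X$ is lightlike if $g(X,X)=0$. *)

theory Defs
  imports "HOL-Analysis.Analysis"
begin

text \<open>Pointwise (tangent-space) model. The tangent space at a point is a finite-dimensional
real vector space 'v; all tensors are evaluated pointwise.\<close>

definition semi_riem_index :: "('v::euclidean_space \<Rightarrow> 'v \<Rightarrow> real) \<Rightarrow> nat \<Rightarrow> bool" where
  "semi_riem_index g \<nu> \<longleftrightarrow>
     (\<exists>W. subspace W \<and> dim W = \<nu> \<and> (\<forall>w\<in>W. w \<noteq> 0 \<longrightarrow> g w w < 0)) \<and>
     (\<forall>W. subspace W \<and> (\<forall>w\<in>W. w \<noteq> 0 \<longrightarrow> g w w < 0) \<longrightarrow> dim W \<le> \<nu>)"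

definition semi_riemannian :: "('v::euclidean_space \<Rightarrow> 'v \<Rightarrow> real) \<Rightarrow> nat \<Rightarrow> bool" where
  "semi_riemannian g \<nu> \<longleftrightarrow> bilinear g \<and> (\<forall>x y. g x y = g y x) \<and>
     (\<forall>x. (\<forall>y. g x y = 0) \<longrightarrow> x = 0) \<and> semi_riem_index g \<nu>"

definition indef_metric_gff ::
  "nat \<Rightarrow> nat \<Rightarrow> ('v::euclidean_space \<Rightarrow> 'v) \<Rightarrow> (nat \<Rightarrow> 'v) \<Rightarrow> (nat \<Rightarrow> 'v \<Rightarrow> real)
    \<Rightarrow> ('v \<Rightarrow> 'v \<Rightarrow> real) \<Rightarrow> nat \<Rightarrow> bool" where
  "indef_metric_gff n r \<phi> \<xi> \<eta> g \<nu> \<longleftrightarrow>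
     1 \<le> r \<and> DIM('v) = 2*n + r \<and>
     linear \<phi> \<and> dim (range \<phi>) = 2*n \<and> (\<forall>x. \<phi> (\<phi> (\<phi> x)) + \<phi> x = 0) \<and>
     (\<forall>a\<in>{1..r}. linear (\<eta> a)) \<and>
     semi_riemannian g \<nu> \<and> 0 < \<nu> \<and> \<nu> < 2*n + r \<and>
     (\<forall>x. \<phi> (\<phi> x) = - x + (\<Sum>a=1..r. \<eta> a x *\<^sub>R \<xi> a)) \<and>
     (\<forall>a\<in>{1..r}. \<forall>b\<in>{1..r}. \<eta> a (\<xi> b) = (if a = b then 1 else 0)) \<and>
     (\<forall>a\<in>{1..r}. g (\<xi> a) (\<xi> a) = 1 \<or> g (\<xi> a) (\<xi> a) = -1) \<and>
     (\<forall>x y. g (\<phi> x) (\<phi> y) = g x y - (\<Sum>a=1..r. g (\<xi> a) (\<xi> a) * \<eta> a x * \<eta> a y)) \<and>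
     (\<forall>a\<in>{1..r}. \<forall>x. g (\<xi> a) (\<xi> a) * g x (\<xi> a) = \<eta> a x)"

definition fund_form :: "('v \<Rightarrow> 'v) \<Rightarrow> ('v \<Rightarrow> 'v \<Rightarrow> real) \<Rightarrow> 'v \<Rightarrow> 'v \<Rightarrow> real" where
  "fund_form \<phi> g x y = g x (\<phi> y)"

definition P_tensor :: "('v \<Rightarrow> 'v) \<Rightarrow> ('v \<Rightarrow> 'v \<Rightarrow> real) \<Rightarrow> 'v \<Rightarrow> 'v \<Rightarrow> 'v \<Rightarrow> 'v \<Rightarrow> real" where
  "P_tensor \<phi> g X Y Z W =
     fund_form \<phi> g X Z * g Y W - fund_form \<phi> g X W * g Y Z
     - fund_form \<phi> g Y Z * g X W + fund_form \<phi> g Y W * g X Z"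

definition multilinear4 :: "('v::real_vector \<Rightarrow> 'v \<Rightarrow> 'v \<Rightarrow> 'v \<Rightarrow> real) \<Rightarrow> bool" where
  "multilinear4 U \<longleftrightarrow>
     (\<forall>y z w. linear (\<lambda>x. U x y z w)) \<and> (\<forall>x z w. linear (\<lambda>y. U x y z w)) \<and>
     (\<forall>x y w. linear (\<lambda>z. U x y z w)) \<and> (\<forall>x y z. linear (\<lambda>w. U x y z w))"

definition curv_like :: "nat \<Rightarrow> ('v::euclidean_space \<Rightarrow> 'v) \<Rightarrow> (nat \<Rightarrow> 'v) \<Rightarrow> ('v \<Rightarrow> 'v \<Rightarrow> real)
    \<Rightarrow> ('v \<Rightarrow> 'v \<Rightarrow> 'v \<Rightarrow> 'v \<Rightarrow> real) \<Rightarrow> bool" where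
  "curv_like r \<phi> \<xi> g U \<longleftrightarrow> multilinear4 U \<and>
     (\<forall>X Y Z W. U X Y Z W = - U Y X Z W) \<and>
     (\<forall>X Y Z W. U X Y Z W = - U X Y W Z) \<and>
     (\<forall>X Y Z W. U X Y Z W = U Z W X Y) \<and>
     (\<forall>X Y Z W. U X Y Z W + U X Z W Y + U X W Y Z = 0) \<and>
     (\<forall>X\<in>range \<phi>. \<forall>Y\<in>range \<phi>. \<forall>Z\<in>range \<phi>. \<forall>W\<in>range \<phi>.
        U X Y (\<phi> Z) W + U X Y Z (\<phi> W) =
        (\<Sum>a=1..r. g (\<xi> a) (\<xi> a)) * P_tensor \<phi> g X Y Z W)"

end

theory Submission imports Defs begin

text \<open>Put \<open>D = T - S\<close>. By (i)--(iv) \<open>D\<close> is an algebraic curvature tensor, and the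
right-hand sides \<open>\<epsilon> P\<close> of (v) cancel, so \<open>D\<close> is \<open>\<phi>\<close>-invariant on \<open>range \<phi>\<close>. The hypothesis
kills the holomorphic sectional curvature \<open>D(X, \<phi>X, X, \<phi>X)\<close> for non-lightlike \<open>X \<in> range \<phi>\<close>;
perturbing a lightlike \<open>X\<close> along a non-lightlike direction and passing to the limit extends this
to all of \<open>range \<phi>\<close> (without such a direction, nondegeneracy of \<open>g\<close> forces \<open>range \<phi> = 0\<close>).
As in the Kaehler case, polarization shows that all sectional curvatures of \<open>D\<close> on \<open>range \<phi>\<close>
vanish, hence so does \<open>D\<close>. The symmetries and the Bianchi identity reduce the remaining
components on \<open>range \<phi> + span {\<xi>\<^sub>\<alpha>}\<close>, which is the whole space, to those prescribed in (vi).\<close>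

lemma multilinear4_simps:
  assumes "multilinear4 U"
  shows "U (x + x') y z w = U x y z w + U x' y z w"
    and "U x (y + y') z w = U x y z w + U x y' z w"
    and "U x y (z + z') w = U x y z w + U x y z' w"
    and "U x y z (w + w') = U x y z w + U x y z w'"
    and "U (x - x') y z w = U x y z w - U x' y z w"
    and "U x (y - y') z w = U x y z w - U x y' z w"
    and "U x y (z - z') w = U x y z w - U x y z' w"
    and "U x y z (w - w') = U x y z w - U x y z w'"
    and "U (c *\<^sub>R x) y z w = c * U x y z w"
    and "U x (c *\<^sub>R y) z w = c * U x y z w"
    and "U x y (c *\<^sub>R z) w = c * U x y z w"
    and "U x y z (c *\<^sub>R w) = c * U x y z w"
    and "U (- x) y z w = - U x y z w"
    and "U x (- y) z w = - U x y z w"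
    and "U x y (- z) w = - U x y z w"
    and "U x y z (- w) = - U x y z w"
    and "U 0 y z w = 0" and "U x 0 z w = 0" and "U x y 0 w = 0" and "U x y z 0 = 0"
proof -
  have l1: "linear (\<lambda>x. U x y z w)" for y z w using assms unfolding multilinear4_def by blast
  have l2: "linear (\<lambda>y. U x y z w)" for x z w using assms unfolding multilinear4_def by blast
  have l3: "linear (\<lambda>z. U x y z w)" for x y w using assms unfolding multilinear4_def by blast
  have l4: "linear (\<lambda>w. U x y z w)" for x y z using assms unfolding multilinear4_def by blast
  show "U (x + x') y z w = U x y z w + U x' y z w" using linear_add[OF l1] .
  show "U x (y + y') z w = U x y z w + U x y' z w" using linear_add[OF l2] .
  show "U x y (z + z') w = U x y z w + U x y z' w" using linear_add[OF l3] .
  show "U x y z (w + w') = U x y z w + U x y z w'" using linear_add[OF l4] .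
  show "U (x - x') y z w = U x y z w - U x' y z w" using linear_diff[OF l1] .
  show "U x (y - y') z w = U x y z w - U x y' z w" using linear_diff[OF l2] .
  show "U x y (z - z') w = U x y z w - U x y z' w" using linear_diff[OF l3] .
  show "U x y z (w - w') = U x y z w - U x y z w'" using linear_diff[OF l4] .
  show "U (c *\<^sub>R x) y z w = c * U x y z w" using linear_scale[OF l1] by simp
  show "U x (c *\<^sub>R y) z w = c * U x y z w" using linear_scale[OF l2] by simp
  show "U x y (c *\<^sub>R z) w = c * U x y z w" using linear_scale[OF l3] by simp
  show "U x y z (c *\<^sub>R w) = c * U x y z w" using linear_scale[OF l4] by simp
  show "U (- x) y z w = - U x y z w" using linear_neg[OF l1] .
  show "U x (- y) z w = - U x y z w" using linear_neg[OF l2] .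
  show "U x y (- z) w = - U x y z w" using linear_neg[OF l3] .
  show "U x y z (- w) = - U x y z w" using linear_neg[OF l4] .
  show "U 0 y z w = 0" using linear_0[OF l1] .
  show "U x 0 z w = 0" using linear_0[OF l2] .
  show "U x y 0 w = 0" using linear_0[OF l3] .
  show "U x y z 0 = 0" using linear_0[OF l4] .
qed

lemma multilinear4_diff:
  "multilinear4 T \<Longrightarrow> multilinear4 S \<Longrightarrow> multilinear4 (\<lambda>x y z w. T x y z w - S x y z w)"
  unfolding multilinear4_def by (auto intro: linear_compose_sub)

lemma multilinear4_eq_0_on_span:
  assumes U: "multilinear4 U" and B: "\<And>x. x \<in> span B"
    and zero: "\<And>x y z w. x \<in> B \<Longrightarrow> y \<in> B \<Longrightarrow> z \<in> B \<Longrightarrow> w \<in> B \<Longrightarrow> U x y z w = 0"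
  shows "U x y z w = 0"
proof -
  have lin: "linear (\<lambda>x. U x y z w)" "linear (\<lambda>y. U x y z w)"
            "linear (\<lambda>z. U x y z w)" "linear (\<lambda>w. U x y z w)" for x y z w
    using U unfolding multilinear4_def by blast+
  have "U x y z w = 0" if "y \<in> B" "z \<in> B" "w \<in> B" for x y z w
    using linear_eq_0_on_span[OF lin(1) _ B] zero that by blast
  then have "U x y z w = 0" if "z \<in> B" "w \<in> B" for x y z w
    using linear_eq_0_on_span[OF lin(2) _ B] that by blast
  then have "U x y z w = 0" if "w \<in> B" for x y z w
    using linear_eq_0_on_span[OF lin(3) _ B] that by blast
  then show ?thesis
    using linear_eq_0_on_span[OF lin(4) _ B] by blast
qed

lemma multilinear4_isCont_line:
  assumes "multilinear4 U"
  shows "isCont (\<lambda>t::real. U (a + t *\<^sub>R b) (c + t *\<^sub>R d) (e + t *\<^sub>R f) (h + t *\<^sub>R k)) t0"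
  by (simp add: multilinear4_simps[OF assms])

section \<open>Algebraic curvature tensors\<close>

locale curvature_tensor =
  fixes U :: "'v::real_vector \<Rightarrow> 'v \<Rightarrow> 'v \<Rightarrow> 'v \<Rightarrow> real"
  assumes multilinear: "multilinear4 U"
    and skew_left: "U X Y Z W = - U Y X Z W"
    and skew_right: "U X Y Z W = - U X Y W Z"
    and pair_sym: "U X Y Z W = U Z W X Y"
    and bianchi: "U X Y Z W + U X Z W Y + U X W Y Z = 0"
begin

lemmas multilinear_simps = multilinear4_simps[OF multilinear]

lemma eq_0_if_sectional_eq_0:
  assumes V: "subspace V"
    and sectional: "\<And>X Y. X \<in> V \<Longrightarrow> Y \<in> V \<Longrightarrow> U X Y X Y = 0"
    and "X \<in> V" "Y \<in> V" "Z \<in> V" "W \<in> V"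
  shows "U X Y Z W = 0"
proof -
  have sym_zero: "U X Y X W = 0" if "X \<in> V" "Y \<in> V" "W \<in> V" for X Y W
  proof -
    have "U X (Y + W) X (Y + W) = 0" using sectional subspace_add[OF V] that by blast
    then show ?thesis
      using sectional that pair_sym[of X W X Y] by (simp add: multilinear_simps)
  qed
  have skew: "U X Y Z W = - U Z Y X W" if "X \<in> V" "Y \<in> V" "Z \<in> V" "W \<in> V" for X Y Z W
    using sym_zero[of "X + Z" Y W] sym_zero[of X Y W] sym_zero[of Z Y W] subspace_add[OF V] that
    by (simp add: multilinear_simps)
  have "U X Z W Y = U X Y Z W"
    using skew[of X Z W Y] pair_sym[of W Z X Y] skew_right[of X Y W Z] assms by linarith
  moreover have "U X W Y Z = U X Y Z W"
    using skew[of X W Y Z] pair_sym[of Y W X Z] skew_right[of X Z Y W] assms calculation by linarith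
  ultimately show ?thesis using bianchi[of X Y Z W] by simp
qed

lemma eq_0_if_crossed_eq_0:
  assumes "U a X b Y = 0" and "U a Y b X = 0"
  shows "U a b X Y = 0"
  using bianchi[of a b X Y] skew_right[of a X Y b] assms by simp

lemma eq_0_if_diagonal_eq_0:
  assumes V: "subspace V"
    and diagonal: "\<And>X Y. X \<in> V \<Longrightarrow> Y \<in> V \<Longrightarrow> U X a X Y = 0"
    and X: "X \<in> V" and Y: "Y \<in> V" and Z: "Z \<in> V"
  shows "U a X Y Z = 0"
proof -
  have swap: "U a P Q W = - U a Q P W" if "P \<in> V" "Q \<in> V" "W \<in> V" for P Q W
  proof -
    have "U (P + Q) a (P + Q) W = 0" using diagonal subspace_add[OF V] that by blast
    then show ?thesis
      using diagonal that skew_left[of P a Q W] skew_left[of Q a P W] by (simp add: multilinear_simps)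
  qed
  show ?thesis
    using bianchi[of a X Y Z] skew_right[of a Y Z X] skew_right[of a X Z Y]
      swap[OF Y X Z] swap[OF Z X Y] by linarith
qed

text \<open>The six hypotheses are one representative of each orbit of the symmetries of \<open>U\<close>
  acting on the positions of the \<open>\<xi>\<close>'s.\<close>

lemma eq_0_on_union_image:
  assumes AAAA: "\<And>x y z w. x \<in> A \<Longrightarrow> y \<in> A \<Longrightarrow> z \<in> A \<Longrightarrow> w \<in> A \<Longrightarrow> U x y z w = 0"
    and CAAA: "\<And>a x y z. a \<in> I \<Longrightarrow> x \<in> A \<Longrightarrow> y \<in> A \<Longrightarrow> z \<in> A \<Longrightarrow> U (\<xi> a) x y z = 0"
    and CCAA: "\<And>a b x y. a \<in> I \<Longrightarrow> b \<in> I \<Longrightarrow> x \<in> A \<Longrightarrow> y \<in> A \<Longrightarrow> U (\<xi> a) (\<xi> b) x y = 0"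
    and CACA: "\<And>a b x y. a \<in> I \<Longrightarrow> b \<in> I \<Longrightarrow> x \<in> A \<Longrightarrow> y \<in> A \<Longrightarrow> U (\<xi> a) x (\<xi> b) y = 0"
    and CACC: "\<And>a b c x. a \<in> I \<Longrightarrow> b \<in> I \<Longrightarrow> c \<in> I \<Longrightarrow> x \<in> A \<Longrightarrow> U (\<xi> a) x (\<xi> b) (\<xi> c) = 0"
    and CCCC: "\<And>a b c d. a \<in> I \<Longrightarrow> b \<in> I \<Longrightarrow> c \<in> I \<Longrightarrow> d \<in> I \<Longrightarrow> U (\<xi> a) (\<xi> b) (\<xi> c) (\<xi> d) = 0"
    and "x \<in> A \<union> \<xi> ` I" "y \<in> A \<union> \<xi> ` I" "z \<in> A \<union> \<xi> ` I" "w \<in> A \<union> \<xi> ` I"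
  shows "U x y z w = 0"
proof -
  have swap_left: "U x y z w = 0 \<Longrightarrow> U y x z w = 0" for x y z w using skew_left[of x y z w] by simp
  have swap_right: "U x y z w = 0 \<Longrightarrow> U x y w z = 0" for x y z w using skew_right[of x y z w] by simp
  have swap_pairs: "U x y z w = 0 \<Longrightarrow> U z w x y = 0" for x y z w using pair_sym[of x y z w] by simp
  note ACAA = swap_left[OF CAAA] and AACA = swap_pairs[OF CAAA] and AACC = swap_pairs[OF CCAA]
  note AAAC = swap_right[OF AACA] and CAAC = swap_right[OF CACA] and ACCA = swap_left[OF CACA]
  note ACAC = swap_left[OF CAAC] and ACCC = swap_left[OF CACC]
  note CCAC = swap_pairs[OF ACCC] and CCCA = swap_right[OF CCAC]
  show ?thesis
    using assms(7-) by (elim UnE imageE)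
      (simp_all add: AAAA CAAA CCAA CACA CACC CCCC ACAA AACA AACC AAAC CAAC ACCA ACAC ACCC CCAC CCCA)
qed

end

lemma curvature_tensor_diff:
  assumes "curvature_tensor T" and "curvature_tensor S"
  shows "curvature_tensor (\<lambda>x y z w. T x y z w - S x y z w)"
proof -
  interpret T: curvature_tensor T by fact
  interpret S: curvature_tensor S by fact
  show ?thesis
  proof
    show "multilinear4 (\<lambda>x y z w. T x y z w - S x y z w)"
      by (rule multilinear4_diff[OF T.multilinear S.multilinear])
    show "T X Y Z W - S X Y Z W = - (T Y X Z W - S Y X Z W)" for X Y Z W
      using T.skew_left[of X Y Z W] S.skew_left[of X Y Z W] by simp
    show "T X Y Z W - S X Y Z W = - (T X Y W Z - S X Y W Z)" for X Y Z W
      using T.skew_right[of X Y Z W] S.skew_right[of X Y Z W] by simp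
    show "T X Y Z W - S X Y Z W = T Z W X Y - S Z W X Y" for X Y Z W
      using T.pair_sym[of X Y Z W] S.pair_sym[of X Y Z W] by simp
    show "T X Y Z W - S X Y Z W + (T X Z W Y - S X Z W Y) + (T X W Y Z - S X W Y Z) = 0" for X Y Z W
      using T.bianchi[of X Y Z W] S.bianchi[of X Y Z W] by simp
  qed
qed

locale J_invariant_curvature_tensor =
  curvature_tensor U for U :: "'v::real_vector \<Rightarrow> 'v \<Rightarrow> 'v \<Rightarrow> 'v \<Rightarrow> real" +
  fixes J :: "'v \<Rightarrow> 'v"
  assumes linear_J: "linear J"
    and J_cube: "J (J (J x)) + J x = 0"
    and J_skew: "X \<in> range J \<Longrightarrow> Y \<in> range J \<Longrightarrow> Z \<in> range J \<Longrightarrow> W \<in> range J \<Longrightarrow>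
                 U X Y (J Z) W = - U X Y Z (J W)"
begin

lemma subspace_range_J: "subspace (range J)"
  using linear_subspace_image[OF linear_J subspace_UNIV] .

lemma J_J: "X \<in> range J \<Longrightarrow> J (J X) = - X"
  using J_cube by (auto simp: eq_neg_iff_add_eq_0)

lemma J_skew_left:
  assumes "X \<in> range J" "Y \<in> range J" "Z \<in> range J" "W \<in> range J"
  shows "U (J X) Y Z W = - U X (J Y) Z W"
  using J_skew[OF assms(3,4,1,2)] pair_sym[of "J X" Y Z W] pair_sym[of X "J Y" Z W] by simp

lemma holomorphic_polarization:
  assumes X: "X \<in> range J" and Y: "Y \<in> range J"
  shows "U (X + Y) (J (X + Y)) (X + Y) (J (X + Y)) + U (X - Y) (J (X - Y)) (X - Y) (J (X - Y))
       = 2 * U X (J X) X (J X) + 2 * U Y (J Y) Y (J Y) + 4 * U X Y X Y + 12 * U X (J Y) X (J Y)"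
proof -
  have JX: "J X \<in> range J" and JY: "J Y \<in> range J" by simp_all
  have "U (X + Y) (J (X + Y)) (X + Y) (J (X + Y)) + U (X - Y) (J (X - Y)) (X - Y) (J (X - Y))
      = 2 * U X (J X) X (J X) + 2 * U Y (J Y) Y (J Y)
        + 2 * (U Y (J Y) X (J X) + U Y (J X) Y (J X) + U Y (J X) X (J Y)
             + U X (J Y) Y (J X) + U X (J Y) X (J Y) + U X (J X) Y (J Y))"
    by (simp add: linear_add[OF linear_J] linear_diff[OF linear_J] multilinear_simps algebra_simps)
  moreover have "U Y (J Y) X (J X) = U X (J X) Y (J Y)" "U Y (J X) X (J Y) = U X (J Y) Y (J X)"
    using pair_sym by blast+
  moreover have swap: "U X (J Y) X (J Y) = U X (J Y) Y (J X)"
    using J_skew[OF X JY X Y] skew_right[of X "J Y" "J X" Y] by simp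
  moreover have "U Y (J X) Y (J X) = U X (J Y) X (J Y)"
    using J_skew_left[OF JY JX Y JX] skew_left[of "J Y" X Y "J X"] J_J[OF X] J_J[OF Y] swap
    by (simp add: multilinear_simps)
  moreover have "U X (J X) Y (J Y) = U X Y X Y + U X (J Y) Y (J X)"
    using bianchi[of X "J X" Y "J Y"] skew_right[of X Y "J Y" "J X"] J_skew[OF X Y X JY] J_J[OF Y]
      skew_right[of X "J Y" "J X" Y]
    by (simp add: multilinear_simps)
  ultimately show ?thesis by simp
qed

lemma sectional_eq_0_if_holomorphic_eq_0:
  assumes hol: "\<And>X. X \<in> range J \<Longrightarrow> U X (J X) X (J X) = 0"
    and X: "X \<in> range J" and Y: "Y \<in> range J"
  shows "U X Y X Y = 0"
proof -
  have mixed: "U X Y X Y + 3 * U X (J Y) X (J Y) = 0" if "Y \<in> range J" for Y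
    using holomorphic_polarization[OF X that] hol[OF X] hol[OF that]
      hol[OF subspace_add[OF subspace_range_J X that]] hol[OF subspace_diff[OF subspace_range_J X that]]
    by simp
  \<comment> \<open>for \<open>Y\<close> and \<open>J Y\<close> this reads \<open>k + 3 d = 0\<close> and \<open>d + 3 k = 0\<close>, with \<open>k = U X Y X Y\<close>\<close>
  show ?thesis
    using mixed[OF Y] mixed[of "J Y"] J_J[OF Y] by (simp add: multilinear_simps)
qed

lemma eq_0_if_holomorphic_eq_0:
  assumes "\<And>X. X \<in> range J \<Longrightarrow> U X (J X) X (J X) = 0"
    and "X \<in> range J" "Y \<in> range J" "Z \<in> range J" "W \<in> range J"
  shows "U X Y Z W = 0"
  using eq_0_if_sectional_eq_0[OF subspace_range_J sectional_eq_0_if_holomorphic_eq_0] assms by blast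

end

section \<open>Indefinite metric g.f.f.-structures\<close>

lemma isCont_eq_0_if_eventually_eq_0:
  fixes f :: "real \<Rightarrow> real"
  assumes "isCont f x" and "\<forall>\<^sub>F t in at x. f t = 0"
  shows "f x = 0"
proof (rule ccontr)
  assume "f x \<noteq> 0"
  then have "\<forall>\<^sub>F t in at x. f t \<noteq> 0"
    using tendsto_imp_eventually_ne assms(1) isCont_def by blast
  with assms(2) have "\<forall>\<^sub>F t in at x. False" by eventually_elim simp
  then show False by simp
qed

lemma eventually_at_0_product_ne_0:
  fixes b c :: real
  assumes "c \<noteq> 0"
  shows "\<forall>\<^sub>F t in at 0. t * (b + c * t) \<noteq> 0"
  using eventually_neq_at_within[of 0 0 UNIV] eventually_neq_at_within[of "- b / c" 0 UNIV]
proof eventually_elim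
  case (elim t)
  then have "b + c * t \<noteq> 0" using assms by (auto simp: field_simps)
  with elim show ?case by simp
qed

lemma curvature_tensor_if_curv_like: "curv_like r \<phi> \<xi> g U \<Longrightarrow> curvature_tensor U"
  unfolding curv_like_def curvature_tensor_def by blast

lemma curv_like_phi_skew:
  assumes "curv_like r \<phi> \<xi> g U"
    and "X \<in> range \<phi>" "Y \<in> range \<phi>" "Z \<in> range \<phi>" "W \<in> range \<phi>"
  shows "U X Y (\<phi> Z) W + U X Y Z (\<phi> W) = (\<Sum>a=1..r. g (\<xi> a) (\<xi> a)) * P_tensor \<phi> g X Y Z W"
  using assms unfolding curv_like_def by blast

context
  fixes n r \<nu> :: nat and \<phi> :: "'v::euclidean_space \<Rightarrow> 'v" and \<xi> :: "nat \<Rightarrow> 'v"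
    and \<eta> :: "nat \<Rightarrow> 'v \<Rightarrow> real" and g :: "'v \<Rightarrow> 'v \<Rightarrow> real"
  assumes gff: "indef_metric_gff n r \<phi> \<xi> \<eta> g \<nu>"
begin

lemma linear_phi: "linear \<phi>"
  and phi_cube: "\<phi> (\<phi> (\<phi> x)) + \<phi> x = 0"
  and phi_square: "\<phi> (\<phi> x) = - x + (\<Sum>a=1..r. \<eta> a x *\<^sub>R \<xi> a)"
  using gff unfolding indef_metric_gff_def by blast+

lemma bilinear_g: "bilinear g"
  and g_sym: "g x y = g y x"
  and g_nondegenerate: "(\<And>y. g x y = 0) \<Longrightarrow> x = 0"
  using gff unfolding indef_metric_gff_def semi_riemannian_def by blast+

lemma linear_eta: "a \<in> {1..r} \<Longrightarrow> linear (\<eta> a)"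
  and eta_xi: "a \<in> {1..r} \<Longrightarrow> b \<in> {1..r} \<Longrightarrow> \<eta> a (\<xi> b) = (if a = b then 1 else 0)"
  and eta_eq_g_xi: "a \<in> {1..r} \<Longrightarrow> g (\<xi> a) (\<xi> a) * g x (\<xi> a) = \<eta> a x"
  and xi_unit: "a \<in> {1..r} \<Longrightarrow> g (\<xi> a) (\<xi> a) = 1 \<or> g (\<xi> a) (\<xi> a) = -1"
  using gff unfolding indef_metric_gff_def by blast+

lemma xi_nonnull: "a \<in> {1..r} \<Longrightarrow> g (\<xi> a) (\<xi> a) \<noteq> 0"
  using xi_unit by force

lemma subspace_range_phi: "subspace (range \<phi>)"
  using linear_subspace_image[OF linear_phi subspace_UNIV] .

lemma eta_phi:
  assumes a: "a \<in> {1..r}"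
  shows "\<eta> a (\<phi> u) = 0"
proof -
  have "(\<Sum>b=1..r. \<eta> b (\<phi> u) *\<^sub>R \<xi> b) = 0"
    using phi_square[of "\<phi> u"] phi_cube[of u] by (simp add: eq_neg_iff_add_eq_0)
  then have "0 = \<eta> a (\<Sum>b=1..r. \<eta> b (\<phi> u) *\<^sub>R \<xi> b)"
    using linear_0[OF linear_eta[OF a]] by simp
  also have "\<dots> = (\<Sum>b=1..r. \<eta> b (\<phi> u) * \<eta> a (\<xi> b))"
    by (simp add: linear_sum[OF linear_eta[OF a]] linear_scale[OF linear_eta[OF a]])
  also have "\<dots> = (\<Sum>b=1..r. if b = a then \<eta> a (\<phi> u) else 0)"
    by (rule sum.cong) (simp_all add: eta_xi[OF a])
  also have "\<dots> = \<eta> a (\<phi> u)"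
    using a by simp
  finally show ?thesis by simp
qed

lemma g_phi_xi: "a \<in> {1..r} \<Longrightarrow> g (\<phi> u) (\<xi> a) = 0"
  using eta_eq_g_xi[of a "\<phi> u"] eta_phi xi_nonnull by simp

lemma decomposition: "(\<Sum>a=1..r. \<eta> a x *\<^sub>R \<xi> a) - \<phi> (\<phi> x) = x"
  using phi_square[of x] by simp

lemma span_range_phi_xi: "x \<in> span (range \<phi> \<union> \<xi> ` {1..r})"
proof -
  have "(\<Sum>a=1..r. \<eta> a x *\<^sub>R \<xi> a) \<in> span (range \<phi> \<union> \<xi> ` {1..r})"
    by (intro span_sum span_scale span_base) auto
  moreover have "\<phi> (\<phi> x) \<in> span (range \<phi> \<union> \<xi> ` {1..r})"
    by (intro span_base) auto
  ultimately have "(\<Sum>a=1..r. \<eta> a x *\<^sub>R \<xi> a) - \<phi> (\<phi> x) \<in> span (range \<phi> \<union> \<xi> ` {1..r})"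
    by (rule span_diff)
  then show ?thesis by (simp only: decomposition)
qed

lemma range_phi_trivial_if_null:
  assumes null: "\<And>Y. Y \<in> range \<phi> \<Longrightarrow> g Y Y = 0" and X: "X \<in> range \<phi>"
  shows "X = 0"
proof (rule g_nondegenerate)
  fix v
  have lin: "linear (\<lambda>x. g x y)" "linear (g x)" for x y
    using bilinear_g unfolding bilinear_def by blast+
  have orth: "g X Y = 0" if Y: "Y \<in> range \<phi>" for Y
  proof -
    have "g (X + Y) (X + Y) = g X X + 2 * g X Y + g Y Y"
      using g_sym[of Y X] by (simp add: linear_add[OF lin(1)] linear_add[OF lin(2)])
    then show ?thesis using null X Y subspace_add[OF subspace_range_phi X Y] by simp
  qed
  have "g X v = g X ((\<Sum>a=1..r. \<eta> a v *\<^sub>R \<xi> a) - \<phi> (\<phi> v))"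
    by (simp only: decomposition)
  also have "\<dots> = (\<Sum>a=1..r. \<eta> a v * g X (\<xi> a)) - g X (\<phi> (\<phi> v))"
    by (simp add: linear_diff[OF lin(2)] linear_sum[OF lin(2)] linear_scale[OF lin(2)])
  also have "\<dots> = 0"
    using X orth g_phi_xi by auto
  finally show "g X v = 0" .
qed

lemma J_invariant_curvature_tensor_diff:
  assumes T: "curv_like r \<phi> \<xi> g T" and S: "curv_like r \<phi> \<xi> g S"
  shows "J_invariant_curvature_tensor (\<lambda>x y z w. T x y z w - S x y z w) \<phi>"
proof -
  have "curvature_tensor (\<lambda>x y z w. T x y z w - S x y z w)"
    using curvature_tensor_diff curvature_tensor_if_curv_like T S by blast
  moreover have "T X Y (\<phi> Z) W - S X Y (\<phi> Z) W = - (T X Y Z (\<phi> W) - S X Y Z (\<phi> W))"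
    if "X \<in> range \<phi>" "Y \<in> range \<phi>" "Z \<in> range \<phi>" "W \<in> range \<phi>" for X Y Z W
    using curv_like_phi_skew[OF T that] curv_like_phi_skew[OF S that] by linarith
  ultimately show ?thesis
    using linear_phi phi_cube
    by (simp add: J_invariant_curvature_tensor_def J_invariant_curvature_tensor_axioms_def)
qed

lemma holomorphic_eq_0_extends_to_null:
  assumes U: "multilinear4 U"
    and nonnull: "\<And>X. X \<in> range \<phi> \<Longrightarrow> g X X \<noteq> 0 \<Longrightarrow> U X (\<phi> X) X (\<phi> X) = 0"
    and X: "X \<in> range \<phi>"
  shows "U X (\<phi> X) X (\<phi> X) = 0"
proof -
  consider "g X X \<noteq> 0" | "\<forall>Y\<in>range \<phi>. g Y Y = 0" | Y where "Y \<in> range \<phi>" "g Y Y \<noteq> 0" "g X X = 0"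
    by blast
  then show ?thesis
  proof cases
    case 1
    then show ?thesis using nonnull X by blast
  next
    case 2
    then have "X = 0" using range_phi_trivial_if_null X by blast
    then show ?thesis by (simp add: multilinear4_simps[OF U])
  next
    case (3 Y)
    have lin: "linear (\<lambda>x. g x y)" "linear (g x)" for x y
      using bilinear_g unfolding bilinear_def by blast+
    have "\<forall>\<^sub>F t in at 0. t * (2 * g X Y + g Y Y * t) \<noteq> 0"
      using eventually_at_0_product_ne_0 \<open>g Y Y \<noteq> 0\<close> by blast
    then have "\<forall>\<^sub>F t in at 0. U (X + t *\<^sub>R Y) (\<phi> X + t *\<^sub>R \<phi> Y) (X + t *\<^sub>R Y) (\<phi> X + t *\<^sub>R \<phi> Y) = 0"
    proof eventually_elim
      case (elim t)
      have "g (X + t *\<^sub>R Y) (X + t *\<^sub>R Y) = t * (2 * g X Y + g Y Y * t)"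
        using \<open>g X X = 0\<close> g_sym[of Y X]
        by (simp add: linear_add[OF lin(1)] linear_add[OF lin(2)] linear_scale[OF lin(1)]
            linear_scale[OF lin(2)] algebra_simps)
      moreover have "X + t *\<^sub>R Y \<in> range \<phi>"
        using subspace_range_phi X \<open>Y \<in> range \<phi>\<close> by (simp add: subspace_add subspace_scale)
      ultimately show ?case
        using nonnull[of "X + t *\<^sub>R Y"] elim
        by (simp add: linear_add[OF linear_phi] linear_scale[OF linear_phi])
    qed
    then have "U (X + 0 *\<^sub>R Y) (\<phi> X + 0 *\<^sub>R \<phi> Y) (X + 0 *\<^sub>R Y) (\<phi> X + 0 *\<^sub>R \<phi> Y) = 0"
      by (rule isCont_eq_0_if_eventually_eq_0[OF multilinear4_isCont_line[OF U]])
    then show ?thesis by simp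
  qed
qed

end

theorem mainTheorem16:
  fixes n r :: nat and \<nu> :: nat
    and \<phi> :: "'v::euclidean_space \<Rightarrow> 'v" and \<xi> :: "nat \<Rightarrow> 'v" and \<eta> :: "nat \<Rightarrow> 'v \<Rightarrow> real"
    and g :: "'v \<Rightarrow> 'v \<Rightarrow> real"
    and T S :: "'v \<Rightarrow> 'v \<Rightarrow> 'v \<Rightarrow> 'v \<Rightarrow> real"
  assumes str: "indef_metric_gff n r \<phi> \<xi> \<eta> g \<nu>"
    and T: "curv_like r \<phi> \<xi> g T" and S: "curv_like r \<phi> \<xi> g S"
    and va: "\<forall>X\<in>range \<phi>. \<forall>Y\<in>range \<phi>. \<forall>a\<in>{1..r}. T X (\<xi> a) X Y = S X (\<xi> a) X Y"
    and vb: "\<forall>X\<in>range \<phi>. \<forall>Y\<in>range \<phi>. \<forall>a\<in>{1..r}. \<forall>b\<in>{1..r}.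
               T (\<xi> a) X (\<xi> b) Y = S (\<xi> a) X (\<xi> b) Y"
    and vc: "\<forall>X\<in>range \<phi>. \<forall>a\<in>{1..r}. \<forall>b\<in>{1..r}. \<forall>c\<in>{1..r}.
               T (\<xi> a) X (\<xi> b) (\<xi> c) = S (\<xi> a) X (\<xi> b) (\<xi> c)"
    and vd: "\<forall>a\<in>{1..r}. \<forall>b\<in>{1..r}. \<forall>c\<in>{1..r}. \<forall>d\<in>{1..r}.
               T (\<xi> a) (\<xi> b) (\<xi> c) (\<xi> d) = S (\<xi> a) (\<xi> b) (\<xi> c) (\<xi> d)"
    and hol: "\<forall>X\<in>range \<phi>. g X X \<noteq> 0 \<longrightarrow> T X (\<phi> X) X (\<phi> X) = S X (\<phi> X) X (\<phi> X)"
  shows "T = S"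
proof -
  define D where "D x y z w = T x y z w - S x y z w" for x y z w
  interpret D: J_invariant_curvature_tensor D \<phi>
    unfolding D_def by (rule J_invariant_curvature_tensor_diff[OF str T S])
  have "D X (\<phi> X) X (\<phi> X) = 0" if "X \<in> range \<phi>" for X
    using holomorphic_eq_0_extends_to_null[OF str D.multilinear _ that] hol by (simp add: D_def)
  then have DDDD: "D X Y Z W = 0"
    if "X \<in> range \<phi>" "Y \<in> range \<phi>" "Z \<in> range \<phi>" "W \<in> range \<phi>" for X Y Z W
    using D.eq_0_if_holomorphic_eq_0 that by simp
  have CDDD: "D (\<xi> a) X Y Z = 0"
    if a: "a \<in> {1..r}" and "X \<in> range \<phi>" "Y \<in> range \<phi>" "Z \<in> range \<phi>" for a X Y Z
  proof (rule D.eq_0_if_diagonal_eq_0[OF subspace_range_phi[OF str] _ that(2-4)])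
    show "D X (\<xi> a) X Y = 0" if "X \<in> range \<phi>" "Y \<in> range \<phi>" for X Y
      using va[rule_format, OF that a] by (simp add: D_def)
  qed
  have CCDD: "D (\<xi> a) (\<xi> b) X Y = 0"
    if "a \<in> {1..r}" "b \<in> {1..r}" "X \<in> range \<phi>" "Y \<in> range \<phi>" for a b X Y
    by (rule D.eq_0_if_crossed_eq_0)
      (simp_all add: D_def vb[rule_format, OF that(3,4,1,2)] vb[rule_format, OF that(4,3,1,2)])
  have "D x y z w = 0" for x y z w
    by (rule multilinear4_eq_0_on_span[OF D.multilinear span_range_phi_xi[OF str]],
        rule D.eq_0_on_union_image[OF DDDD CDDD CCDD])
      (simp_all add: D_def vb[rule_format] vc[rule_format] vd[rule_format])
  then show ?thesis by (simp add: D_def fun_eq_iff)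
qed

end
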